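(* Let $a,b,c>0$. Let $B(a,b,c)$ denote the semi-infinite real symmetric matrix indexed by $j,k\in\mathbb{Z}_{+}=\{0,1,2,\ldots\}$ with entries \[ B(a,b,c)_{j,k}=\frac{\Gamma(j+k+a)}{\Gamma(j+k+b+c)}\sqrt{\frac{\Gamma(j+b)\Gamma(j+c)\Gamma(k+b)\Gamma(k+c)}{\Gamma(j+a)\,j!\,\Gamma(k+a)\,k!}}. \] Let $A$ be the semi-infinite matrix indexed by $\mathbb{Z}_{+}$ with entries $A_{2j,2k}=B(a,b,c)_{j,k}$, $A_{2j+1,2k+1}=B(a+1,b+1,c)_{j,k}$ for $j,k\in\mathbb{Z}_{+}$, and $A_{j,k}=0$ whenever $j,k$ have different parity. Let $D$ be the semi-infinite matrix with $D_{j,j+1}=-D_{j+1,j}=d(j)$ for $j\in\mathbb{Z}_{+}$ and $D_{j,k}=0$ otherwise, where \[ d(2j)=\sqrt{(j+a)(j+b)},\qquad d(2j+1)=\sqrt{(j+1)(j+c)},\qquad j\in\mathbb{Z}_{+}. \] Then $A$ and $D$ commute, i.e. $AD=DA$ (the matrix products being well defined entrywise since $D$ has finitely many nonzero entries in each row and column).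
   Context: $\Gamma$ is Euler's Gamma function. $A$ corresponds to the direct sum $B(a,b,c)\oplus B(a+1,b+1,c)$ with respect to the decomposition $\ell^2(\mathbb{Z}_+)=\ell^2(2\mathbb{Z}_+)\oplus\ell^2(2\mathbb{Z}_++1)$. *)

theory Defs
  imports "HOL-Analysis.Analysis"
begin

type_synonym smatrix = "nat \<Rightarrow> nat \<Rightarrow> real"

definition Bmat :: "real \<Rightarrow> real \<Rightarrow> real \<Rightarrow> smatrix" where
  "Bmat a b c j k =
     Gamma (real (j + k) + a) / Gamma (real (j + k) + b + c) *
     sqrt ((Gamma (real j + b) * Gamma (real j + c) * Gamma (real k + b) * Gamma (real k + c)) /
           (Gamma (real j + a) * fact j * Gamma (real k + a) * fact k))"

definition Amat :: "real \<Rightarrow> real \<Rightarrow> real \<Rightarrow> smatrix" where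
  "Amat a b c j k =
     (if even j \<and> even k then Bmat a b c (j div 2) (k div 2)
      else if odd j \<and> odd k then Bmat (a + 1) (b + 1) c (j div 2) (k div 2)
      else 0)"

definition dseq :: "real \<Rightarrow> real \<Rightarrow> real \<Rightarrow> nat \<Rightarrow> real" where
  "dseq a b c n =
     (if even n then sqrt ((real (n div 2) + a) * (real (n div 2) + b))
      else sqrt ((real (n div 2) + 1) * (real (n div 2) + c)))"

definition Dmat :: "real \<Rightarrow> real \<Rightarrow> real \<Rightarrow> smatrix" where
  "Dmat a b c j k =
     (if k = j + 1 then dseq a b c j
      else if j = k + 1 then - dseq a b c k
      else 0)"

text \<open>Entrywise matrix product (the series has finitely many nonzero terms
  whenever one factor is row/column finite).\<close>
definition smat_mult :: "smatrix \<Rightarrow> smatrix \<Rightarrow> smatrix" where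
  "smat_mult X Y j k = (\<Sum>m. X j m * Y m k)"

end

theory Submission imports Defs begin

text \<open>Factor \<open>B(a,b,c)\<^sub>p\<^sub>q = \<Gamma>(p+q+a) / \<Gamma>(p+q+b+c) \<cdot> w(p) w(q)\<close>. By the recurrence
  \<open>\<Gamma>(x+1) = x \<Gamma>(x)\<close>, raising the column index by one and replacing \<open>(a,b)\<close> by \<open>(a+1,b+1)\<close>
  multiply \<open>B\<close> by explicit algebraic factors; hence the \<open>(2p, 2q+1)\<close> entry of \<open>AD - DA\<close>
  vanishes by a three-term identity between entries of \<open>B(a,b,c)\<close> and \<open>B(a+1,b+1,c)\<close>.
  Entries of equal parity vanish because \<open>A\<close> preserves parity while \<open>D\<close> flips it, and
  \<open>AD - DA\<close> is symmetric since \<open>A\<close> is symmetric and \<open>D\<close> antisymmetric, which covers the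
  \<open>(2p+1, 2q)\<close> entries.\<close>

lemma Gamma_plus1_pos: "x > 0 \<Longrightarrow> Gamma (x + 1) = x * Gamma (x :: real)"
  by (rule Gamma_plus1) (auto simp: nonpos_Ints_def)

lemma sqrt_eq_mult_sqrt: "w \<ge> 0 \<Longrightarrow> u = w\<^sup>2 * v \<Longrightarrow> sqrt u = w * sqrt (v :: real)"
  by (simp add: real_sqrt_mult)

definition Bweight :: "real \<Rightarrow> real \<Rightarrow> real \<Rightarrow> nat \<Rightarrow> real" where
  "Bweight a b c j = sqrt (Gamma (real j + b) * Gamma (real j + c) / (Gamma (real j + a) * fact j))"

lemma Bmat_eq_Bweight:
  "Bmat a b c j k = Gamma (real (j + k) + a) / Gamma (real (j + k) + b + c) * (Bweight a b c j * Bweight a b c k)"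
proof -
  have "Gamma (real j + b) * Gamma (real j + c) * Gamma (real k + b) * Gamma (real k + c) /
          (Gamma (real j + a) * fact j * Gamma (real k + a) * fact k) =
        Gamma (real j + b) * Gamma (real j + c) / (Gamma (real j + a) * fact j) *
        (Gamma (real k + b) * Gamma (real k + c) / (Gamma (real k + a) * fact k))"
    by (simp add: ac_simps)
  then show ?thesis
    unfolding Bmat_def Bweight_def by (simp only: real_sqrt_mult)
qed

lemma Bmat_symmetric: "Bmat a b c j k = Bmat a b c k j"
  by (simp add: Bmat_eq_Bweight add.commute mult.commute)

lemma Bweight_Suc:
  assumes "a > 0" "b > 0" "c > 0"
  shows "Bweight a b c (Suc j) =
    sqrt ((real j + b) * (real j + c) / ((real j + a) * (real j + 1))) * Bweight a b c j"
proof -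
  have shift: "real (Suc j) + x = (real j + x) + 1" for x
    by simp
  have "Gamma (real (Suc j) + b) * Gamma (real (Suc j) + c) / (Gamma (real (Suc j) + a) * fact (Suc j))
      = (real j + b) * (real j + c) / ((real j + a) * (real j + 1)) *
        (Gamma (real j + b) * Gamma (real j + c) / (Gamma (real j + a) * fact j))"
    unfolding shift using assms by (simp add: Gamma_plus1_pos fact_Suc mult_ac)
  then show ?thesis
    unfolding Bweight_def by (simp only: real_sqrt_mult)
qed

lemma Bweight_shift:
  assumes "a > 0" "b > 0"
  shows "Bweight (a + 1) (b + 1) c j = sqrt ((real j + b) / (real j + a)) * Bweight a b c j"
proof -
  have shift: "real j + (x + 1) = (real j + x) + 1" for x
    by simp
  have "Gamma (real j + (b + 1)) * Gamma (real j + c) / (Gamma (real j + (a + 1)) * fact j)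
      = (real j + b) / (real j + a) *
        (Gamma (real j + b) * Gamma (real j + c) / (Gamma (real j + a) * fact j))"
    unfolding shift using assms by (simp add: Gamma_plus1_pos mult_ac)
  then show ?thesis
    unfolding Bweight_def by (simp only: real_sqrt_mult)
qed

lemma Bmat_Suc_right:
  assumes "a > 0" "b > 0" "c > 0"
  shows "Bmat a b c p (Suc q) =
    (real (p + q) + a) / (real (p + q) + b + c) *
    sqrt ((real q + b) * (real q + c) / ((real q + a) * (real q + 1))) * Bmat a b c p q"
proof -
  define n where "n = real (p + q)"
  have "n \<ge> 0"
    by (simp add: n_def)
  have "Gamma (real (p + Suc q) + a) = (n + a) * Gamma (n + a)"
    and "Gamma (real (p + Suc q) + b + c) = (n + b + c) * Gamma (n + b + c)"
    using assms \<open>n \<ge> 0\<close> Gamma_plus1_pos [of "n + a"] Gamma_plus1_pos [of "n + b + c"]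
    by (simp_all add: n_def ac_simps)
  then show ?thesis
    unfolding Bmat_eq_Bweight Bweight_Suc [OF assms] n_def [symmetric]
    by (simp add: mult_ac)
qed

lemma Bmat_Suc_left:
  assumes "a > 0" "b > 0" "c > 0"
  shows "Bmat a b c (Suc p) q =
    (real (p + q) + a) / (real (p + q) + b + c) *
    sqrt ((real p + b) * (real p + c) / ((real p + a) * (real p + 1))) * Bmat a b c p q"
  using Bmat_Suc_right [OF assms, of q p] by (simp add: Bmat_symmetric add.commute)

lemma Bmat_shift:
  assumes "a > 0" "b > 0" "c > 0"
  shows "Bmat (a + 1) (b + 1) c p q =
    (real (p + q) + a) / (real (p + q) + b + c) *
    sqrt ((real p + b) / (real p + a)) * sqrt ((real q + b) / (real q + a)) * Bmat a b c p q"
proof -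
  define n where "n = real (p + q)"
  have "n \<ge> 0"
    by (simp add: n_def)
  have "Gamma (n + (a + 1)) = (n + a) * Gamma (n + a)"
    and "Gamma (n + (b + 1) + c) = (n + b + c) * Gamma (n + b + c)"
    using assms \<open>n \<ge> 0\<close> Gamma_plus1_pos [of "n + a"] Gamma_plus1_pos [of "n + b + c"]
    by (simp_all add: ac_simps)
  then show ?thesis
    unfolding Bmat_eq_Bweight Bweight_shift [OF assms(1,2)] n_def [symmetric]
    by (simp add: mult_ac)
qed

lemma dseq_even [simp]: "dseq a b c (2 * p) = sqrt ((real p + a) * (real p + b))"
  by (simp add: dseq_def)

lemma dseq_odd [simp]: "dseq a b c (2 * p + 1) = sqrt ((real p + 1) * (real p + c))"
  by (simp add: dseq_def)

text \<open>With \<open>t = sqrt ((q + b) / (q + a))\<close> and \<open>\<rho> = (p + q + a) / (p + q + b + c)\<close>, each of the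
  four terms is a rational multiple of \<open>t * Bmat a b c p q\<close>, and the identity reduces to
  \<open>(q + a) - \<rho> (q + c) = \<rho> (p + b) - p\<close>.\<close>
lemma Bmat_contiguous:
  assumes "a > 0" "b > 0" "c > 0"
  shows "Bmat a b c p q * dseq a b c (2 * q) - Bmat a b c p (Suc q) * dseq a b c (2 * q + 1) =
    dseq a b c (2 * p) * Bmat (a + 1) (b + 1) c p q -
    (if p = 0 then 0 else dseq a b c (2 * p - 1) * Bmat (a + 1) (b + 1) c (p - 1) q)"
proof -
  define n where "n = real (p + q)"
  define \<rho> where "\<rho> = (n + a) / (n + b + c)"
  define t where "t = sqrt ((real q + b) / (real q + a))"
  define X where "X = Bmat a b c p q * t"
  have "n \<ge> 0"
    by (simp add: n_def)
  have nonzero: "real x + a \<noteq> 0" "real x + 1 \<noteq> 0" for x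
    using assms by (metis add_nonneg_pos of_nat_0_le_iff less_irrefl zero_less_one)+
  have "dseq a b c (2 * q) = (real q + a) * t"
    unfolding dseq_even t_def using assms by (intro sqrt_eq_mult_sqrt) (simp_all add: power2_eq_square)
  then have left: "Bmat a b c p q * dseq a b c (2 * q) = (real q + a) * X"
    by (simp add: X_def)
  have "sqrt ((real q + b) * (real q + c) / ((real q + a) * (real q + 1))) * sqrt ((real q + 1) * (real q + c))
      = (real q + c) * t"
    unfolding t_def real_sqrt_mult [symmetric] using assms nonzero
    by (intro sqrt_eq_mult_sqrt) (simp_all add: power2_eq_square)
  then have right: "Bmat a b c p (Suc q) * dseq a b c (2 * q + 1) = \<rho> * (real q + c) * X"
    unfolding Bmat_Suc_right [OF assms] dseq_odd X_def \<rho>_def n_def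
    by (simp add: ac_simps)
  have "sqrt ((real p + a) * (real p + b)) * sqrt ((real p + b) / (real p + a)) = real p + b"
    unfolding real_sqrt_mult [symmetric] using assms nonzero
    by (simp add: power2_eq_square add_nonneg_pos)
  then have upper: "dseq a b c (2 * p) * Bmat (a + 1) (b + 1) c p q = \<rho> * (real p + b) * X"
    unfolding Bmat_shift [OF assms] dseq_even X_def \<rho>_def t_def n_def
    by (simp add: ac_simps)
  have lower: "(if p = 0 then 0 else dseq a b c (2 * p - 1) * Bmat (a + 1) (b + 1) c (p - 1) q)
      = real p * X"
  proof (cases p)
    case (Suc i)
    define \<rho>' where "\<rho>' = (real (i + q) + a) / (real (i + q) + b + c)"
    define s where "s = sqrt ((real i + b) / (real i + a))"
    have "dseq a b c (2 * p - 1) = sqrt ((real i + 1) * (real i + c))"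
      using Suc by (simp add: dseq_def)
    then have "dseq a b c (2 * p - 1) * Bmat (a + 1) (b + 1) c (p - 1) q
        = (sqrt ((real i + 1) * (real i + c)) * s) * (\<rho>' * Bmat a b c i q) * t"
      unfolding Suc diff_Suc_1 Bmat_shift [OF assms] t_def s_def \<rho>'_def by (simp add: ac_simps)
    also have "sqrt ((real i + 1) * (real i + c)) * s
        = (real i + 1) * sqrt ((real i + b) * (real i + c) / ((real i + a) * (real i + 1)))"
      unfolding s_def real_sqrt_mult [symmetric] using assms nonzero
      by (intro sqrt_eq_mult_sqrt) (simp_all add: power2_eq_square)
    also have "(real i + 1) * sqrt ((real i + b) * (real i + c) / ((real i + a) * (real i + 1))) *
        (\<rho>' * Bmat a b c i q) * t = real p * X"
      unfolding X_def Suc Bmat_Suc_left [OF assms] \<rho>'_def by (simp add: ac_simps)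
    finally show ?thesis
      using Suc by simp
  qed simp
  have "(real q + a) - \<rho> * (real q + c) = \<rho> * (real p + b) - real p"
    using assms \<open>n \<ge> 0\<close> by (simp add: \<rho>_def n_def field_simps)
  then have "(real q + a) * X - \<rho> * (real q + c) * X = \<rho> * (real p + b) * X - real p * X"
    by (metis left_diff_distrib)
  then show ?thesis
    unfolding left right upper lower .
qed

lemma smat_mult_Dmat_right:
  "smat_mult X (Dmat a b c) j k =
    (if k = 0 then 0 else X j (k - 1) * dseq a b c (k - 1)) - X j (Suc k) * dseq a b c k"
proof -
  have "smat_mult X (Dmat a b c) j k = (\<Sum>m\<in>{k - 1, Suc k}. X j m * Dmat a b c m k)"
    unfolding smat_mult_def by (rule suminf_finite) (auto simp: Dmat_def)
  then show ?thesis
    by (cases k) (auto simp: Dmat_def)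
qed

lemma smat_mult_Dmat_left:
  "smat_mult (Dmat a b c) X j k =
    dseq a b c j * X (Suc j) k - (if j = 0 then 0 else dseq a b c (j - 1) * X (j - 1) k)"
proof -
  have "smat_mult (Dmat a b c) X j k = (\<Sum>m\<in>{j - 1, Suc j}. Dmat a b c j m * X m k)"
    unfolding smat_mult_def by (rule suminf_finite) (auto simp: Dmat_def)
  then show ?thesis
    by (cases j) (auto simp: Dmat_def)
qed

lemma smat_mult_Dmat_transpose:
  assumes "\<And>j k. X j k = X k j"
  shows "smat_mult (Dmat a b c) X k j = - smat_mult X (Dmat a b c) j k"
  by (simp add: smat_mult_Dmat_left smat_mult_Dmat_right assms mult.commute)

lemma Amat_symmetric: "Amat a b c j k = Amat a b c k j"
  by (simp add: Amat_def Bmat_symmetric)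

lemma Amat_mixed_parity: "even j \<noteq> even k \<Longrightarrow> Amat a b c j k = 0"
  by (auto simp: Amat_def)

lemma Amat_Dmat_commute_even_odd:
  assumes "a > 0" "b > 0" "c > 0"
  shows "smat_mult (Amat a b c) (Dmat a b c) (2 * p) (2 * q + 1) =
    smat_mult (Dmat a b c) (Amat a b c) (2 * p) (2 * q + 1)"
proof -
  have "Suc (2 * q + 1) = 2 * Suc q" "Suc (2 * p) = 2 * p + 1"
    by simp_all
  moreover have "p \<noteq> 0 \<Longrightarrow> 2 * p - 1 = 2 * (p - 1) + 1"
    by simp
  ultimately show ?thesis
    using Bmat_contiguous [OF assms, of p q]
    by (simp add: smat_mult_Dmat_left smat_mult_Dmat_right Amat_def del: dseq_even dseq_odd)
qed

theorem mainTheorem1: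
  fixes a b c :: real
  assumes "a > 0" and "b > 0" and "c > 0"
  shows "smat_mult (Amat a b c) (Dmat a b c) = smat_mult (Dmat a b c) (Amat a b c)"
proof (intro ext)
  fix j k :: nat
  let ?A = "Amat a b c" and ?D = "Dmat a b c"
  consider "even j = even k" | p q where "j = 2 * p" "k = 2 * q + 1" | p q where "j = 2 * p + 1" "k = 2 * q"
    by (metis evenE oddE)
  then show "smat_mult ?A ?D j k = smat_mult ?D ?A j k"
  proof cases
    case 1
    then show ?thesis
      by (cases j; cases k) (simp_all add: smat_mult_Dmat_left smat_mult_Dmat_right Amat_mixed_parity)
  next
    case 2
    then show ?thesis
      using Amat_Dmat_commute_even_odd [OF assms] by simp
  next
    case (3 p q)
    have "smat_mult ?A ?D j k = - smat_mult ?D ?A k j"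
      using smat_mult_Dmat_transpose [OF Amat_symmetric] by simp
    also have "\<dots> = - smat_mult ?A ?D k j"
      using 3 Amat_Dmat_commute_even_odd [OF assms] by simp
    also have "\<dots> = smat_mult ?D ?A j k"
      using smat_mult_Dmat_transpose [OF Amat_symmetric] by simp
    finally show ?thesis .
  qed
qed

end
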